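(* Let $T$, $\mathcal{J}=\langle N,B\rangle$, an allocation $(\mathcal{C}_s,\mathcal{B}_s)$, a node $v$ and a scenario $\sigma$ be as in the context. If $T_v$ can offer more than $N$ working VMs in scenario $\sigma$, then $T_v$ can offer exactly $N$ working VMs in scenario $\sigma$ (with the same bandwidth allocation $\mathcal{B}_s$).
   Context: $T=(V,L)$ is a rooted tree whose leaves form the set $H$ of physical machines (PMs) and whose internal nodes are switches; for a node $u$, $T_u$ is the subtree rooted at $u$ and $l_u$ is the link from $u$ to its parent. A request is $\mathcal{J}=\langle N,B\rangle$ with $N$ a positive integer and $B\ge0$. An allocation is a pair $(\mathcal{C}_s,\mathcal{B}_s)$ with $\mathcal{C}_s:H\to\mathbb{Z}_{\ge0}$ and $\mathcal{B}_s:L\to\mathbb{R}_{\ge0}$. A scenario is either "no failure" or the failure of a single PM $F\in H$. The subtree $T_v$ can offer $n$ working VMs in a scenario if there is an assignment $w:H\cap T_v\to\mathbb{Z}_{\ge0}$ with $w(h)\le\mathcal{C}_s(h)$ for all $h$, $w(F)=0$ if $F$ is the failed PM, $\sum_{h\in H\cap T_v}w(h)=n$, and for every node $u$ of $T_v$ (including $u=v$, whenever $l_u$ exists) $\min\{n_u,N-n_u\}\cdot B\le\mathcal{B}_s(l_u)$, where $n_u=\sum_{h\in H\cap T_u}w(h)$. *)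

theory Defs
  imports Complex_Main
begin

text \<open>The link l_u from u to its parent is identified with the
(non-root) node u, so a bandwidth allocation is a function on nodes, relevant
only on V - {r}.\<close>

definition rooted_tree :: "'a set \<Rightarrow> 'a \<Rightarrow> ('a \<Rightarrow> 'a) \<Rightarrow> bool" where
  "rooted_tree V r par \<longleftrightarrow> finite V \<and> r \<in> V \<and>
     (\<forall>u \<in> V - {r}. par u \<in> V) \<and>
     (\<forall>u \<in> V. \<exists>k. (par ^^ k) u = r)"

definition subtree :: "'a set \<Rightarrow> 'a \<Rightarrow> ('a \<Rightarrow> 'a) \<Rightarrow> 'a \<Rightarrow> 'a set" where
  "subtree V r par v = {u \<in> V. \<exists>k. (\<forall>i<k. (par ^^ i) u \<noteq> r) \<and> (par ^^ k) u = v}"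

text \<open>Leaves (physical machines): nodes that are nobody's parent.\<close>
definition leaves :: "'a set \<Rightarrow> 'a \<Rightarrow> ('a \<Rightarrow> 'a) \<Rightarrow> 'a set" where
  "leaves V r par = {h \<in> V. \<not> (\<exists>u \<in> V - {r}. par u = h)}"

text \<open>Scenario: None = no failure, Some F = failure of PM F.
  can_offer V r par N B Cs Bs v \<sigma> n: the subtree T_v can offer n working VMs.\<close>
definition can_offer ::
  "'a set \<Rightarrow> 'a \<Rightarrow> ('a \<Rightarrow> 'a) \<Rightarrow> nat \<Rightarrow> real \<Rightarrow> ('a \<Rightarrow> nat) \<Rightarrow> ('a \<Rightarrow> real)
   \<Rightarrow> 'a \<Rightarrow> 'a option \<Rightarrow> nat \<Rightarrow> bool" where
  "can_offer V r par N B Cs Bs v \<sigma> n \<longleftrightarrow>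
     (\<exists>w :: 'a \<Rightarrow> nat.
        (\<forall>h \<in> leaves V r par \<inter> subtree V r par v. w h \<le> Cs h) \<and>
        (\<forall>F. \<sigma> = Some F \<longrightarrow> F \<in> leaves V r par \<inter> subtree V r par v \<longrightarrow> w F = 0) \<and>
        (\<Sum>h \<in> leaves V r par \<inter> subtree V r par v. w h) = n \<and>
        (\<forall>u \<in> subtree V r par v. u \<noteq> r \<longrightarrow>
           (let nu = (\<Sum>h \<in> leaves V r par \<inter> subtree V r par u. w h) in
              min (real nu) (real N - real nu) * B \<le> Bs u)))"

end

theory Submission
  imports Defs
begin

text \<open>Take an assignment w of n > N working VMs in T_v. The leaf sets of the subtrees
  of T_v form a laminar family, and the bandwidth condition on link l_u only involves the
  demand min(n_u, N - n_u) of the leaf set of T_u. So it suffices to lower w pointwise to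
  total N without raising any demand above its old value or above 0. This works
  recursively: let M be a heaviest outermost set of the family. If the target fits into M,
  all of it is placed inside M, recursing into the sets strictly below M, and every other
  set gets weight 0. Otherwise M keeps its full weight and the rest is taken from outside
  M; a set there ends with weight at most both its old weight and N - weight M, which is
  at most its old slack N - w A.\<close>

definition demand :: "nat \<Rightarrow> nat \<Rightarrow> real" where
  "demand N x = min (real x) (real N - real x)"

lemma demand_0 [simp]: "demand N 0 = 0"
  and demand_self [simp]: "demand N N = 0"
  by (simp_all add: demand_def)

lemma demand_nonneg: "x \<le> N \<Longrightarrow> 0 \<le> demand N x"
  by (simp add: demand_def)

lemma demand_le_demand: "y \<le> x \<Longrightarrow> x + y \<le> N \<Longrightarrow> demand N y \<le> demand N x"
  unfolding demand_def by linarith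

lemma demand_mult_le_of_demand_le:
  assumes "demand N y \<le> max (demand N x) 0" "demand N x * B \<le> b" "0 \<le> B" "0 \<le> b"
  shows "demand N y * B \<le> b"
proof -
  have "demand N y * B \<le> max (demand N x) 0 * B"
    using assms(1,3) by (rule mult_right_mono)
  also have "\<dots> \<le> b"
    using assms(2,4) by (simp add: max_def)
  finally show ?thesis .
qed

definition laminar :: "'a set set \<Rightarrow> bool" where
  "laminar F \<longleftrightarrow> (\<forall>A\<in>F. \<forall>B\<in>F. A \<subseteq> B \<or> B \<subseteq> A \<or> A \<inter> B = {})"

lemma laminar_subset: "laminar F \<Longrightarrow> G \<subseteq> F \<Longrightarrow> laminar G"
  unfolding laminar_def by blast

lemma laminar_image_Int: "laminar F \<Longrightarrow> laminar ((\<lambda>A. S \<inter> A) ` F)"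
  unfolding laminar_def by blast

lemma laminar_heaviest_maximal:
  fixes w :: "'a \<Rightarrow> nat"
  assumes "finite F" "F \<noteq> {}" "\<forall>A\<in>F. finite A" "laminar F"
  obtains M where "M \<in> F" "\<forall>A\<in>F. sum w A \<le> sum w M" "\<forall>A\<in>F. A \<subseteq> M \<or> A \<inter> M = {}"
proof -
  define m where "m = Max (sum w ` F)"
  define heaviest where "heaviest = {A \<in> F. sum w A = m}"
  have heaviest_max: "sum w A \<le> m" if "A \<in> F" for A
    unfolding m_def using assms(1) that by simp
  have "m \<in> sum w ` F"
    unfolding m_def using assms(1,2) by simp
  then have "heaviest \<noteq> {}" "finite heaviest"
    unfolding heaviest_def using assms(1) by auto
  then obtain M where M: "M \<in> heaviest" and M_maximal: "\<forall>A\<in>heaviest. M \<subseteq> A \<longrightarrow> M = A"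
    using finite_has_maximal by blast
  have "A \<subseteq> M \<or> A \<inter> M = {}" if A: "A \<in> F" for A
  proof -
    have "M \<subseteq> A \<Longrightarrow> A = M"
    proof -
      assume "M \<subseteq> A"
      then have "m \<le> sum w A"
        using M A assms(3) unfolding heaviest_def by (auto intro: sum_mono2)
      then have "A \<in> heaviest"
        using A heaviest_max[OF A] unfolding heaviest_def by simp
      then show "A = M"
        using M_maximal \<open>M \<subseteq> A\<close> by blast
    qed
    then show ?thesis
      using assms(4) A M unfolding laminar_def heaviest_def by blast
  qed
  then show thesis
    using that M heaviest_max unfolding heaviest_def by blast
qed

lemma exists_le_weight_with_sum:
  fixes w :: "'a \<Rightarrow> nat"
  assumes "finite P" "k \<le> sum w P"
  shows "\<exists>w'. (\<forall>x\<in>P. w' x \<le> w x) \<and> sum w' P = k"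
  using assms
proof (induction P arbitrary: k rule: finite_induct)
  case empty
  then show ?case by auto
next
  case (insert x P)
  show ?case
  proof (cases "k \<le> sum w P")
    case True
    with insert.IH obtain w1 where "\<forall>y\<in>P. w1 y \<le> w y" "sum w1 P = k"
      by blast
    moreover have "sum (w1(x := 0)) P = sum w1 P"
      using insert.hyps by (intro sum.cong) auto
    ultimately show ?thesis
      using insert.hyps by (intro exI[of _ "w1(x := 0)"]) auto
  next
    case False
    have "sum (w(x := k - sum w P)) P = sum w P"
      using insert.hyps by (intro sum.cong) auto
    then show ?thesis
      using False insert.hyps insert.prems by (intro exI[of _ "w(x := k - sum w P)"]) auto
  qed
qed

text \<open>The slack demand N k is needed only while recursing inside the heaviest set; for the
  final total k = N it vanishes.\<close>

definition demand_reduced :: "nat \<Rightarrow> nat \<Rightarrow> 'a set set \<Rightarrow> ('a \<Rightarrow> nat) \<Rightarrow> ('a \<Rightarrow> nat) \<Rightarrow> bool" where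
  "demand_reduced N k F w w' \<longleftrightarrow>
     (\<forall>A\<in>F. demand N (sum w' A) \<le> max (demand N (sum w A)) (demand N k))"

lemma demand_reduced_fill_heaviest:
  fixes w :: "'a \<Rightarrow> nat"
  assumes "finite P" "M \<subseteq> P" "F \<subseteq> Pow P"
    and heaviest: "\<forall>A\<in>F. sum w A \<le> sum w M" and nested: "\<forall>A\<in>F. A \<subseteq> M \<or> A \<inter> M = {}"
    and "sum w M < k" "k \<le> N" "k \<le> sum w P"
  shows "\<exists>w'. (\<forall>x\<in>P. w' x \<le> w x) \<and> sum w' P = k \<and> demand_reduced N k F w w'"
proof -
  have finite_rest: "finite (P - M)"
    using assms(1) by simp
  have "sum w P = sum w (P - M) + sum w M"
    using assms(1,2) by (metis sum.subset_diff)
  then have "k - sum w M \<le> sum w (P - M)"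
    using assms(8) by linarith
  then obtain w2 where w2_le: "\<forall>x\<in>P - M. w2 x \<le> w x" and w2_sum: "sum w2 (P - M) = k - sum w M"
    using exists_le_weight_with_sum[OF finite_rest] by blast
  define w' where "w' x = (if x \<in> M then w x else w2 x)" for x
  have sum_inside: "sum w' A = sum w A" if "A \<subseteq> M" for A
    using that unfolding w'_def by (intro sum.cong) auto
  have sum_outside: "sum w' A = sum w2 A" if "A \<inter> M = {}" for A
    using that unfolding w'_def by (intro sum.cong) auto
  have "sum w' P = sum w' (P - M) + sum w' M"
    using assms(1,2) by (metis sum.subset_diff)
  also have "\<dots> = k"
    using sum_outside[of "P - M"] sum_inside[of M] w2_sum assms(6) by (simp add: Diff_Int_distrib2)
  finally have "sum w' P = k" .
  moreover have "demand N (sum w' A) \<le> demand N (sum w A)" if A: "A \<in> F" for A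
  proof (cases "A \<subseteq> M")
    case False
    then have A_rest: "A \<subseteq> P - M"
      using A nested assms(3) by auto
    then have "sum w' A = sum w2 A"
      by (intro sum_outside) blast
    moreover have "sum w2 A \<le> sum w A"
      using A_rest w2_le by (intro sum_mono) auto
    moreover have "sum w2 A \<le> k - sum w M"
      using A_rest finite_rest w2_sum by (metis sum_mono2 zero_le)
    ultimately show ?thesis
      using heaviest A assms(6,7) by (intro demand_le_demand) auto
  qed (simp add: sum_inside)
  ultimately show ?thesis
    unfolding demand_reduced_def using w2_le
    by (intro exI[of _ w']) (auto simp: w'_def intro: max.coboundedI1)
qed

lemma demand_reduced_concentrate:
  fixes w :: "'a \<Rightarrow> nat"
  assumes "finite P" "M \<subseteq> P" "M \<in> F" "F \<subseteq> Pow P" "k \<le> N"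
    and nested: "\<forall>A\<in>F. A \<subseteq> M \<or> A \<inter> M = {}"
    and w1: "\<forall>x\<in>M. w1 x \<le> w x" "sum w1 M = k" "demand_reduced N k {A \<in> F. A \<subset> M} w w1"
  shows "\<exists>w'. (\<forall>x\<in>P. w' x \<le> w x) \<and> sum w' P = k \<and> demand_reduced N k F w w'"
proof -
  define w' where "w' x = (if x \<in> M then w1 x else 0)" for x
  have finite_sets: "finite A" if "A \<in> F" for A
    using that assms(1,4) finite_subset by blast
  have sum_w': "sum w' A = sum w1 (A \<inter> M)" if "finite A" for A
    unfolding w'_def using that by (simp add: sum.inter_restrict)
  have "demand N (sum w' A) \<le> max (demand N (sum w A)) (demand N k)" if A: "A \<in> F" for A
  proof -
    consider "A \<subset> M" | "A = M" | "A \<inter> M = {}"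
      using A nested by blast
    then show ?thesis
    proof cases
      case 1
      then show ?thesis
        using w1(3) A sum_w'[OF finite_sets[OF A]] Int_absorb2[of A M]
        unfolding demand_reduced_def by auto
    next
      case 2
      then show ?thesis
        using sum_w'[OF finite_sets[OF A]] w1(2) by simp
    next
      case 3
      then show ?thesis
        using sum_w'[OF finite_sets[OF A]] demand_nonneg[OF assms(5)] by simp
    qed
  qed
  moreover have "sum w' P = k"
    using sum_w'[OF assms(1)] assms(2) w1(2) Int_absorb1[OF assms(2)] by simp
  ultimately show ?thesis
    unfolding demand_reduced_def using w1(1) by (intro exI[of _ w']) (auto simp: w'_def)
qed

lemma laminar_demand_reduction:
  fixes w :: "'a \<Rightarrow> nat"
  assumes "finite F" "finite P" "F \<subseteq> Pow P" "laminar F" "k \<le> N" "k \<le> sum w P"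
  shows "\<exists>w'. (\<forall>x\<in>P. w' x \<le> w x) \<and> sum w' P = k \<and> demand_reduced N k F w w'"
  using assms
proof (induction F arbitrary: P rule: finite_psubset_induct)
  case (psubset F)
  show ?case
  proof (cases "F = {}")
    case True
    then show ?thesis
      using exists_le_weight_with_sum[OF psubset.prems(1,5)] by (auto simp: demand_reduced_def)
  next
    case False
    have finite_sets: "\<forall>A\<in>F. finite A"
      using psubset.prems(1,2) finite_subset by blast
    obtain M where M: "M \<in> F" and heaviest: "\<forall>A\<in>F. sum w A \<le> sum w M"
      and nested: "\<forall>A\<in>F. A \<subseteq> M \<or> A \<inter> M = {}"
      using laminar_heaviest_maximal[OF psubset.hyps False finite_sets psubset.prems(3)] by blast
    have "M \<subseteq> P"
      using M psubset.prems(2) by blast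
    show ?thesis
    proof (cases "k \<le> sum w M")
      case True
      have "{A \<in> F. A \<subset> M} \<subset> F"
        using M by blast
      moreover have "laminar {A \<in> F. A \<subset> M}"
        using psubset.prems(3) by (rule laminar_subset) blast
      ultimately obtain w1 where "\<forall>x\<in>M. w1 x \<le> w x" "sum w1 M = k"
        "demand_reduced N k {A \<in> F. A \<subset> M} w w1"
        using psubset.IH[of _ M] finite_sets M True psubset.prems(4) by blast
      then show ?thesis
        using demand_reduced_concentrate[OF psubset.prems(1) \<open>M \<subseteq> P\<close> M psubset.prems(2,4) nested]
        by blast
    next
      case False
      then show ?thesis
        using demand_reduced_fill_heaviest[OF psubset.prems(1) \<open>M \<subseteq> P\<close> psubset.prems(2)
            heaviest nested _ psubset.prems(4,5)]
        by simp
    qed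
  qed
qed

lemma subtree_subset: "subtree V r par v \<subseteq> V"
  by (auto simp: subtree_def)

lemma subtree_trans:
  assumes "u \<in> subtree V r par v"
  shows "subtree V r par u \<subseteq> subtree V r par v"
proof
  fix x assume "x \<in> subtree V r par u"
  then obtain j where "x \<in> V" and below_u: "\<forall>i<j. (par ^^ i) x \<noteq> r" "(par ^^ j) x = u"
    by (auto simp: subtree_def)
  obtain d where below_v: "\<forall>i<d. (par ^^ i) u \<noteq> r" "(par ^^ d) u = v"
    using assms by (auto simp: subtree_def)
  have "(par ^^ i) x \<noteq> r" if "i < d + j" for i
  proof (cases "i < j")
    case False
    then have "(par ^^ i) x = (par ^^ (i - j)) u"
      using below_u(2) by (metis funpow_add le_add_diff_inverse2 not_less o_apply)
    then show ?thesis
      using below_v(1) that False by auto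
  qed (use below_u in auto)
  moreover have "(par ^^ (d + j)) x = v"
    using below_u(2) below_v(2) by (simp add: funpow_add)
  ultimately show "x \<in> subtree V r par v"
    unfolding subtree_def using \<open>x \<in> V\<close> by blast
qed

lemma subtree_ancestor:
  assumes "u \<in> V" "j \<le> k" "\<forall>i<k. (par ^^ i) h \<noteq> r" "(par ^^ j) h = u" "(par ^^ k) h = v"
  shows "u \<in> subtree V r par v"
proof -
  have "(par ^^ (k - j)) u = v"
    using assms(2,4,5) by (metis funpow_add le_add_diff_inverse2 o_apply)
  moreover have "(par ^^ i) u \<noteq> r" if "i < k - j" for i
    using assms(3,4) that by (metis add_diff_inverse_nat add_less_cancel_left funpow_add
        less_diff_conv o_apply)
  ultimately show ?thesis
    unfolding subtree_def using assms(1) by blast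
qed

lemma laminar_subtrees: "laminar (subtree V r par ` V)"
  unfolding laminar_def
proof (intro ballI)
  fix A C assume "A \<in> subtree V r par ` V" "C \<in> subtree V r par ` V"
  then obtain u1 u2 where u: "u1 \<in> V" "u2 \<in> V" "A = subtree V r par u1" "C = subtree V r par u2"
    by blast
  show "A \<subseteq> C \<or> C \<subseteq> A \<or> A \<inter> C = {}"
  proof (cases "A \<inter> C = {}")
    case False
    then obtain h k1 k2 where
      k1: "\<forall>i<k1. (par ^^ i) h \<noteq> r" "(par ^^ k1) h = u1" and
      k2: "\<forall>i<k2. (par ^^ i) h \<noteq> r" "(par ^^ k2) h = u2"
      using u by (auto simp: subtree_def)
    have "u1 \<in> subtree V r par u2 \<or> u2 \<in> subtree V r par u1"
      using subtree_ancestor[OF u(1) _ k2(1) k1(2) k2(2)] subtree_ancestor[OF u(2) _ k1(1) k2(2) k1(2)]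
      by linarith
    then show ?thesis
      using u subtree_trans[of _ V r par] by blast
  qed simp
qed

lemma subtree_leaf_sets:
  fixes V :: "'a set" and r :: 'a and par :: "'a \<Rightarrow> 'a"
  assumes "finite V"
  defines "L u \<equiv> leaves V r par \<inter> subtree V r par u"
  shows "finite (L v)" "finite (L ` subtree V r par v)"
    and "L ` subtree V r par v \<subseteq> Pow (L v)" "laminar (L ` subtree V r par v)"
proof -
  have "finite (subtree V r par v)"
    using assms(1) by (rule finite_subset[OF subtree_subset])
  then show "finite (L v)" "finite (L ` subtree V r par v)"
    unfolding L_def by simp_all
  show "L ` subtree V r par v \<subseteq> Pow (L v)"
    unfolding L_def using subtree_trans by fastforce
  show "laminar (L ` subtree V r par v)"
    unfolding L_def image_image[symmetric]
    by (intro laminar_image_Int laminar_subset[OF laminar_subtrees image_mono[OF subtree_subset]])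
qed

theorem lemma2:
  fixes V :: "'a set" and r :: 'a and par :: "'a \<Rightarrow> 'a"
    and N :: nat and B :: real and Cs :: "'a \<Rightarrow> nat" and Bs :: "'a \<Rightarrow> real"
    and v :: 'a and \<sigma> :: "'a option"
  assumes "rooted_tree V r par"
    and "N > 0" and "B \<ge> 0"
    and "\<forall>u \<in> V - {r}. Bs u \<ge> 0"
    and "v \<in> V"
    and "\<forall>F. \<sigma> = Some F \<longrightarrow> F \<in> leaves V r par"
    and "\<exists>n > N. can_offer V r par N B Cs Bs v \<sigma> n"
  shows "can_offer V r par N B Cs Bs v \<sigma> N"
proof -
  define L where "L u = leaves V r par \<inter> subtree V r par u" for u
  define F where "F = L ` subtree V r par v"
  obtain n w where "N < n" and w_le: "\<forall>h \<in> L v. w h \<le> Cs h"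
    and w_failed: "\<forall>F. \<sigma> = Some F \<longrightarrow> F \<in> L v \<longrightarrow> w F = 0" and "sum w (L v) = n"
    and w_bandwidth: "\<forall>u \<in> subtree V r par v. u \<noteq> r \<longrightarrow> demand N (sum w (L u)) * B \<le> Bs u"
    using assms(7) unfolding can_offer_def Let_def L_def demand_def[symmetric] by blast
  have "finite V"
    using assms(1) unfolding rooted_tree_def by blast
  then have "finite (L v)" "finite F" "F \<subseteq> Pow (L v)" "laminar F"
    unfolding F_def L_def by (rule subtree_leaf_sets)+
  then obtain w' where w'_le: "\<forall>x\<in>L v. w' x \<le> w x" and "sum w' (L v) = N"
    and "demand_reduced N N F w w'"
    using laminar_demand_reduction[of F "L v" N N w] \<open>N < n\<close> \<open>sum w (L v) = n\<close> by auto
  have "demand N (sum w' (L u)) * B \<le> Bs u" if "u \<in> subtree V r par v" "u \<noteq> r" for u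
  proof (rule demand_mult_le_of_demand_le)
    show "demand N (sum w' (L u)) \<le> max (demand N (sum w (L u))) 0"
      using \<open>demand_reduced N N F w w'\<close> that(1) unfolding demand_reduced_def F_def by simp
    show "demand N (sum w (L u)) * B \<le> Bs u"
      using w_bandwidth that by blast
    have "u \<in> V"
      using that(1) subtree_subset by fast
    then show "0 \<le> Bs u"
      using assms(4) that(2) by blast
  qed (rule assms(3))
  with w'_le w_le w_failed \<open>sum w' (L v) = N\<close> show ?thesis
    unfolding can_offer_def Let_def demand_def[symmetric] L_def[symmetric]
    by (intro exI[of _ w']) (fastforce intro: order.trans)
qed

end
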